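(* Let $n\ge 2$ and $m$ be positive integers, $\lambda=(\lambda_1,\dots,\lambda_n)\in\mathcal{P}^m_n$, and $k_{i,j}=k_{i,j}(\lambda)$ ($1\le i\le j\le n$) as defined below. Consider (1) $\lambda^{(1)}=(\lambda_2,\lambda_3,\dots,\lambda_n)$; (2) $\lambda^{(2)}$ with parts $\lambda^{(2)}_i=\lambda_i-k_{i,n}$, $1\le i\le n-1$; (3) $\lambda^{(3)}$ with parts $\lambda^{(3)}_i=\lambda^{(2)}_i-k_{i,n-1}$, $1\le i\le n-2$; (4) $\lambda^{(4)}$ with parts $\lambda^{(4)}_i=\lambda_i-k_{i,n-1}$, $1\le i\le n-1$. Then $\lambda^{(1)},\lambda^{(2)},\lambda^{(4)}\in\mathcal{P}^m_{n-1}$ and $\lambda^{(3)}\in\mathcal{P}^m_{n-2}$. Moreover, writing $k^{(h)}_{i,j}=k_{i,j}(\lambda^{(h)})$ (computed with $n-1$ in place of $n$ for $h\in\{1,2,4\}$, and with $n-2$ in place of $n$ for $h=3$), we have: $k^{(1)}_{i,j}=k_{i+1,j+1}$ for $1\le i\le j\le n-1$; $k^{(2)}_{i,j}=k_{i,j}$ for $1\le i\le j\le n-1$; $k^{(3)}_{i,j}=k_{i,j}$ for $1\le i\le j\le n-2$; $k^{(3)}_{i,j}=k^{(4)}_{i,j}$ for $1\le i\le j\le n-2$; and for $1\le i\le j\le n-1$: $k^{(4)}_{i,j}=k_{i,j+1}$ if $j=n-1$, and $k^{(4)}_{i,j}=k_{i,j}$ if $j\le n-2$.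
   Context: $\mathcal{P}^m_N$ denotes the set of integer partitions $(\mu_1\ge\cdots\ge\mu_N\ge0)$ with $\mu_i\le m(N-i+1)$ for all $i$. For $\mu\in\mathcal{P}^m_N$, integers $k_{i,j}(\mu)$, $1\le i\le j\le N$, are defined recursively (in order of decreasing $i$, and for fixed $i$ decreasing $j$) by $$k_{i,j}(\mu)=\min\left\{m,\left\lceil\frac{\mu_i-\sum_{\ell=j+1}^N k_{i,\ell}(\mu)+\sum_{\ell=i+1}^j k_{\ell,j}(\mu)}{j-i+1}\right\rceil\right\}.$$ *)

theory Defs
  imports Complex_Main
begin

text \<open>Partitions are represented as functions nat => int, where only the
values at indices 1..N are relevant.  Membership in P^m_N:\<close>

definition inP :: "nat \<Rightarrow> nat \<Rightarrow> (nat \<Rightarrow> int) \<Rightarrow> bool" where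
  "inP m N mu \<longleftrightarrow>
     (\<forall>i. 1 \<le> i \<and> i < N \<longrightarrow> mu (Suc i) \<le> mu i) \<and>
     (\<forall>i. 1 \<le> i \<and> i \<le> N \<longrightarrow> 0 \<le> mu i \<and> mu i \<le> int m * int (N - i + 1))"

function kk :: "nat \<Rightarrow> nat \<Rightarrow> (nat \<Rightarrow> int) \<Rightarrow> nat \<Rightarrow> nat \<Rightarrow> int" where
  "kk m N mu i j =
    (if 1 \<le> i \<and> i \<le> j \<and> j \<le> N then
       min (int m)
         \<lceil>(real_of_int (mu i - (\<Sum>l\<in>{j+1..N}. kk m N mu i l)
                            + (\<Sum>l\<in>{i+1..j}. kk m N mu l j)))
           / real (j - i + 1)\<rceil>
     else 0)"
  by pat_completeness auto
termination
  by (relation "measures [\<lambda>(m,N,mu,i,j). N - i, \<lambda>(m,N,mu,i,j). N - j]") auto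

end

theory Submission
  imports Defs
begin

text \<open>The recursion for k_{i,j} sees \<lambda>_i only through \<lambda>_i - \<Sum>_{l>j} k_{i,l}. Hence
  subtracting the last column of k from \<lambda> (and forgetting the last part) leaves all other
  k_{i,j} unchanged, and dropping the first part merely shifts the indices. The claims about
  \<lambda>^(4) follow in the same way once we know that the last column of \<lambda>^(4) is again
  (k_{i,n})_i, i.e. that the last two columns can be peeled off in either order. This is shown
  by descending induction on i: while k_{i,n} < m, the partial sums
  E_i = \<Sum>_{l\<ge>i} (k_{l,n} - k_{l,n-1} - \<lambda>_n) stay in [0, n - i], which pins down the
  ceilings in the recursions; once k_{i,n} = m, both columns are saturated from there on.\<close>

declare kk.simps[simp del]

definition ceil_div :: "int \<Rightarrow> int \<Rightarrow> int" where
  "ceil_div x d = \<lceil>real_of_int x / real_of_int d\<rceil>"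

lemma ceil_div_le_iff:
  assumes "0 < d" shows "ceil_div x d \<le> q \<longleftrightarrow> x \<le> d * q"
proof -
  have "real_of_int x / real_of_int d \<le> real_of_int q \<longleftrightarrow> real_of_int x \<le> real_of_int (d * q)"
    using assms by (simp add: divide_le_eq mult.commute)
  then show ?thesis unfolding ceil_div_def ceiling_le_iff of_int_le_iff .
qed

lemma le_ceil_div_iff:
  assumes "0 < d" shows "q \<le> ceil_div x d \<longleftrightarrow> d * (q - 1) < x"
  using ceil_div_le_iff[OF assms, of x "q - 1"] by auto

lemma ceil_div_bounds:
  assumes "0 < d" shows "d * (ceil_div x d - 1) < x" "x \<le> d * ceil_div x d"
  using ceil_div_le_iff[OF assms] le_ceil_div_iff[OF assms] by auto

lemma ceil_div_eqI:
  assumes "0 < d" "d * (q - 1) < x" "x \<le> d * q" shows "ceil_div x d = q"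
  using ceil_div_le_iff[OF assms(1)] le_ceil_div_iff[OF assms(1)] assms by (meson order_antisym)

lemma sum_split_cl_ivl:
  fixes f :: "nat \<Rightarrow> 'a::comm_monoid_add"
  assumes "a \<le> b" "b \<le> c"
  shows "(\<Sum>l\<in>{a+1..b}. f l) + (\<Sum>l\<in>{b+1..c}. f l) = (\<Sum>l\<in>{a+1..c}. f l)"
proof -
  have "{a+1..c} = {a+1..b} \<union> {b+1..c}" "{a+1..b} \<inter> {b+1..c} = {}"
    using assms by auto
  then show ?thesis by (simp add: sum.union_disjoint)
qed

lemma kk_unfold:
  assumes "1 \<le> i" "i \<le> j" "j \<le> N"
  shows "kk m N mu i j = min (int m) (ceil_div (mu i - (\<Sum>l\<in>{j+1..N}. kk m N mu i l)
           + (\<Sum>l\<in>{i+1..j}. kk m N mu l j)) (int (j - i + 1)))"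
  by (subst kk.simps) (simp only: assms simp_thms if_True ceil_div_def of_int_of_nat_eq)

lemma kk_outside: "\<not> (1 \<le> i \<and> i \<le> j \<and> j \<le> N) \<Longrightarrow> kk m N mu i j = 0"
  by (subst kk.simps) (rule if_not_P)

lemma kk_induct[consumes 1, case_names step]:
  fixes N i j :: nat
  assumes "j \<le> N"
    and step: "\<And>i j. j \<le> N \<Longrightarrow> (\<And>l. j < l \<Longrightarrow> l \<le> N \<Longrightarrow> P i l)
                 \<Longrightarrow> (\<And>l. i < l \<Longrightarrow> l \<le> j \<Longrightarrow> P l j) \<Longrightarrow> P i j"
  shows "P i j"
  using assms(1)
proof (induction "N - i" arbitrary: i j rule: less_induct)
  case (less i)
  note row_IH = less.hyps
  show ?case using less.prems
  proof (induction "N - j" arbitrary: j rule: less_induct)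
    case (less j)
    show ?case
      by (rule step) (use less row_IH in auto)
  qed
qed

lemma kk_shift_truncate:
  assumes mu': "\<And>i. 1 \<le> i \<Longrightarrow> i \<le> M \<Longrightarrow>
                  mu' i = mu (i + s) - (\<Sum>l\<in>{M+s+1..N}. kk m N mu (i + s) l)"
    and "M + s \<le> N" "1 \<le> i" "j \<le> M"
  shows "kk m M mu' i j = kk m N mu (i + s) (j + s)"
  using \<open>j \<le> M\<close> \<open>1 \<le> i\<close>
proof (induction i j rule: kk_induct)
  case (step i j)
  show ?case
  proof (cases "i \<le> j")
    case True
    have row: "(\<Sum>l\<in>{j+1..M}. kk m M mu' i l) = (\<Sum>l\<in>{j+s+1..M+s}. kk m N mu (i + s) l)"
      using step sum.shift_bounds_cl_nat_ivl[of "kk m N mu (i + s)" "j + 1" s M] by (simp add: ac_simps)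
    have col: "(\<Sum>l\<in>{i+1..j}. kk m M mu' l j) = (\<Sum>l\<in>{i+s+1..j+s}. kk m N mu l (j + s))"
      using step sum.shift_bounds_cl_nat_ivl[of "\<lambda>l. kk m N mu l (j + s)" "i + 1" s j] by (simp add: ac_simps)
    have split: "(\<Sum>l\<in>{j+s+1..M+s}. kk m N mu (i + s) l) + (\<Sum>l\<in>{M+s+1..N}. kk m N mu (i + s) l)
        = (\<Sum>l\<in>{j+s+1..N}. kk m N mu (i + s) l)"
      using step assms(2) by (intro sum_split_cl_ivl) auto
    have "mu' i - (\<Sum>l\<in>{j+1..M}. kk m M mu' i l) = mu (i + s) - (\<Sum>l\<in>{j+s+1..N}. kk m N mu (i + s) l)"
      using mu'[of i] step True row split by simp
    then show ?thesis
      using kk_unfold[of i j M] kk_unfold[of "i + s" "j + s" N] True step assms(2) col by simp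
  next
    case False
    then show ?thesis by (simp add: kk_outside)
  qed
qed

corollary kk_cong:
  assumes "\<And>i. 1 \<le> i \<Longrightarrow> i \<le> N \<Longrightarrow> mu' i = mu i" "1 \<le> i" "j \<le> N"
  shows "kk m N mu' i j = kk m N mu i j"
  using kk_shift_truncate[where M = N and mu' = mu' and s = 0 and N = N and mu = mu] assms by simp

corollary kk_drop_first:
  assumes "1 \<le> i" "i \<le> j" "j \<le> N - 1"
  shows "kk m (N - 1) (\<lambda>i. mu (i + 1)) i j = kk m N mu (i + 1) (j + 1)"
  using kk_shift_truncate[where M = "N - 1" and mu' = "\<lambda>i. mu (i + 1)" and s = 1 and N = N and mu = mu]
    assms by simp

corollary kk_remove_last_col:
  assumes "\<And>i. 1 \<le> i \<Longrightarrow> i \<le> N - 1 \<Longrightarrow> mu' i = mu i - kk m N mu i N" "1 \<le> i" "j \<le> N - 1"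
  shows "kk m (N - 1) mu' i j = kk m N mu i j"
  using kk_shift_truncate[where M = "N - 1" and mu' = mu' and s = 0 and N = N and mu = mu] assms by simp

lemma inP_cong:
  assumes "\<And>i. 1 \<le> i \<Longrightarrow> i \<le> N \<Longrightarrow> mu' i = mu i"
  shows "inP m N mu' \<longleftrightarrow> inP m N mu"
  using assms unfolding inP_def by (auto simp: Suc_le_eq)

lemma inP_bounds:
  assumes "inP m N mu" "1 \<le> i" "i \<le> N"
  shows "0 \<le> mu i" "mu i \<le> int m * int (N - i + 1)"
  using assms unfolding inP_def by auto

lemma inP_antimono:
  assumes "inP m N mu" "1 \<le> i" "i \<le> l" "l \<le> N"
  shows "mu l \<le> mu i"
  using assms(3,4)
proof (induction l rule: dec_induct)
  case (step l)
  then have "mu (Suc l) \<le> mu l" using assms(1,2) unfolding inP_def by auto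
  with step show ?case by simp
qed simp

lemma inP_drop_first:
  assumes "inP m N mu"
  shows "inP m (N - 1) (\<lambda>i. mu (i + 1))"
  unfolding inP_def
proof (intro conjI allI impI)
  fix i assume "1 \<le> i \<and> i < N - 1"
  then show "mu (Suc i + 1) \<le> mu (i + 1)" using assms unfolding inP_def by auto
next
  fix i assume i: "1 \<le> i \<and> i \<le> N - 1"
  then have "N - 1 - i + 1 = N - (i + 1) + 1" by linarith
  then show "0 \<le> mu (i + 1)" "mu (i + 1) \<le> int m * int (N - 1 - i + 1)"
    using inP_bounds[OF assms, of "i + 1"] i by auto
qed

lemma kk_last_col:
  assumes "1 \<le> i" "i \<le> N"
  shows "kk m N mu i N = min (int m) (ceil_div (mu i + (\<Sum>l\<in>{i+1..N}. kk m N mu l N)) (int (N - i + 1)))"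
  using kk_unfold[OF assms order_refl] by simp

lemma kk_last_col_bounds:
  assumes "inP m N mu" "1 \<le> i" "i \<le> N"
  shows "0 \<le> kk m N mu i N \<and> kk m N mu i N \<le> mu i"
  using assms(2,3)
proof (induction "N - i" arbitrary: i rule: less_induct)
  case (less i)
  define A where "A = (\<Sum>l\<in>{i+1..N}. kk m N mu l N)"
  have "0 \<le> A" unfolding A_def by (rule sum_nonneg) (use less in auto)
  have "A \<le> (\<Sum>l\<in>{i+1..N}. mu i)" unfolding A_def
  proof (rule sum_mono)
    fix l assume l: "l \<in> {i+1..N}"
    then have "kk m N mu l N \<le> mu l" using less by auto
    also have "mu l \<le> mu i" using inP_antimono[OF assms(1), of i l] l less by auto
    finally show "kk m N mu l N \<le> mu i" .
  qed
  then have "mu i + A \<le> int (N - i + 1) * mu i" by (simp add: algebra_simps)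
  moreover have "0 \<le> mu i" using inP_bounds[OF assms(1)] less by auto
  ultimately have "0 \<le> ceil_div (mu i + A) (int (N - i + 1))"
    "ceil_div (mu i + A) (int (N - i + 1)) \<le> mu i"
    using \<open>0 \<le> A\<close> le_ceil_div_iff ceil_div_le_iff by auto
  then show ?case using kk_last_col[OF less.prems, of m mu] unfolding A_def[symmetric] by auto
qed

lemma sub_min_ceil_div_le:
  fixes L A x M :: int
  assumes "0 \<le> L" "0 \<le> A" "x \<le> M * (L + 1)"
  shows "x - min M (ceil_div (x + A) (L + 1)) \<le> M * L"
proof (cases "M \<le> ceil_div (x + A) (L + 1)")
  case True
  then show ?thesis using assms(3) by (simp add: algebra_simps)
next
  case False
  then have "x + A \<le> (L + 1) * min M (ceil_div (x + A) (L + 1))"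
    using ceil_div_bounds(2)[of "L + 1" "x + A"] assms(1) by simp
  then have "x - min M (ceil_div (x + A) (L + 1)) \<le> L * min M (ceil_div (x + A) (L + 1))"
    using assms(2) by (simp add: algebra_simps)
  also have "\<dots> \<le> L * M" using assms(1) by (simp add: mult_left_mono)
  finally show ?thesis by (simp add: mult.commute)
qed

lemma kk_last_col_residual_le:
  assumes "inP m N mu" "1 \<le> i" "i \<le> N"
  shows "mu i - kk m N mu i N \<le> int m * int (N - i)"
proof -
  have "0 \<le> (\<Sum>l\<in>{i+1..N}. kk m N mu l N)"
    using kk_last_col_bounds[OF assms(1)] assms(2) by (intro sum_nonneg) auto
  moreover have "mu i \<le> int m * (int (N - i) + 1)"
    using inP_bounds[OF assms] by (simp add: ac_simps)
  ultimately show ?thesis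
    using kk_last_col[OF assms(2,3), of m mu]
      sub_min_ceil_div_le[of "int (N - i)" "\<Sum>l\<in>{i+1..N}. kk m N mu l N" "mu i" "int m"]
    by (simp add: ac_simps)
qed

lemma min_ceil_div_step:
  fixes L d x A a a' M :: int
  assumes "1 \<le> L" "0 \<le> d"
    and a': "a' = min M (ceil_div (x + A) L)"
    and a: "a = min M (ceil_div (x + d + a' + A) (L + 1))"
  shows "a' \<le> a" "a \<le> a' + d"
proof -
  show "a' \<le> a"
  proof (cases "M \<le> ceil_div (x + d + a' + A) (L + 1)")
    case False
    have "L * (a' - 1) < x + A" using a' le_ceil_div_iff[of L a' "x + A"] assms(1) by simp
    then have "(L + 1) * (a' - 1) < x + d + a' + A" using assms(2) by (simp add: algebra_simps)
    then have "a' \<le> ceil_div (x + d + a' + A) (L + 1)" using le_ceil_div_iff[of "L + 1"] assms(1) by simp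
    then show ?thesis using False a by simp
  qed (use a a' in simp)
  show "a \<le> a' + d"
  proof (cases "M \<le> ceil_div (x + A) L")
    case False
    then have "x + A \<le> L * a'" using a' ceil_div_bounds(2)[of L] assms(1) by simp
    moreover have "0 \<le> L * d" using assms(1,2) by simp
    ultimately have "x + d + a' + A \<le> (L + 1) * (a' + d)" by (simp add: algebra_simps)
    then have "ceil_div (x + d + a' + A) (L + 1) \<le> a' + d" using ceil_div_le_iff[of "L + 1"] assms(1) by simp
    then show ?thesis using a by simp
  qed (use a a' assms(2) in simp)
qed

lemma kk_last_col_step:
  assumes "inP m N mu" "1 \<le> i" "i < N"
  shows "kk m N mu (i + 1) N \<le> kk m N mu i N"
    "kk m N mu i N - kk m N mu (i + 1) N \<le> mu i - mu (i + 1)"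
proof -
  define A where "A = (\<Sum>l\<in>{i+2..N}. kk m N mu l N)"
  have next_row: "kk m N mu (i + 1) N = min (int m) (ceil_div (mu (i + 1) + A) (int (N - i)))"
    using kk_last_col[of "i + 1" N m mu] assms(3) unfolding A_def by (simp add: Suc_diff_Suc)
  have "(\<Sum>l\<in>{i+1..N}. kk m N mu l N) = kk m N mu (i + 1) N + A"
    unfolding A_def using assms(3) by (subst sum.atLeast_Suc_atMost) auto
  then have row: "kk m N mu i N = min (int m) (ceil_div (mu (i + 1) + (mu i - mu (i + 1))
                                  + kk m N mu (i + 1) N + A) (int (N - i) + 1))"
    using kk_last_col[of i N m mu] assms(2,3) by (simp add: algebra_simps)
  have d: "0 \<le> mu i - mu (i + 1)" using inP_antimono[OF assms(1), of i "i + 1"] assms by simp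
  have L: "1 \<le> int (N - i)" using assms(3) by simp
  from min_ceil_div_step[OF L d next_row row] show "kk m N mu (i + 1) N \<le> kk m N mu i N"
    "kk m N mu i N - kk m N mu (i + 1) N \<le> mu i - mu (i + 1)" by linarith+
qed

lemma kk_last_last:
  assumes "inP m N mu" "1 \<le> N"
  shows "kk m N mu N N = mu N"
proof -
  have "ceil_div (mu N) 1 = mu N" by (rule ceil_div_eqI) auto
  then show ?thesis
    using kk_last_col[of N N m mu] inP_bounds[OF assms(1) assms(2) order_refl] assms(2) by simp
qed

lemma inP_remove_last_col:
  assumes "inP m N mu"
  shows "inP m (N - 1) (\<lambda>i. mu i - kk m N mu i N)"
  unfolding inP_def
proof (intro conjI allI impI)
  fix i assume "1 \<le> i \<and> i < N - 1"
  then have "1 \<le> i" "i < N" by auto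
  then show "mu (Suc i) - kk m N mu (Suc i) N \<le> mu i - kk m N mu i N"
    using kk_last_col_step(2)[OF assms, of i] by simp
next
  fix i assume i: "1 \<le> i \<and> i \<le> N - 1"
  then have "1 \<le> i" "i \<le> N" by auto
  then show "0 \<le> mu i - kk m N mu i N" using kk_last_col_bounds[OF assms] by simp
  have "N - 1 - i + 1 = N - i" using i by linarith
  then show "mu i - kk m N mu i N \<le> int m * int (N - 1 - i + 1)"
    using kk_last_col_residual_le[OF assms, of i] i by simp
qed

lemma min_ceil_div_saturated:
  fixes L M v v' S :: int
  assumes "1 \<le> L" "M \<le> ceil_div (v' + S) L" "v' \<le> v"
  shows "M \<le> ceil_div (v + M + S) (L + 1)"
proof -
  have "L * (M - 1) < v' + S" using assms(1,2) le_ceil_div_iff[of L] by simp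
  moreover have "(L + 1) * (M - 1) = L * (M - 1) + M - 1" by (simp add: algebra_simps)
  ultimately have "(L + 1) * (M - 1) < v + M + S" using assms(3) by linarith
  then show ?thesis using assms(1) le_ceil_div_iff[of "L + 1"] by simp
qed

text \<open>The two cases of one induction step for the last column of \<lambda>^(4): x = \<lambda>_i, p = \<lambda>_n,
  L = n - i, A and B are the sums of k_{l,n} and k_{l,n-1} over i < l < n, E = E_{i+1},
  a = k_{i,n} and b = k_{i,n-1}.\<close>

lemma min_ceil_div_swap_unsaturated:
  fixes L x A B p E M a b :: int
  assumes L: "1 \<le> L" and "0 \<le> p" "0 \<le> E" "E < L"
    and AB: "A - B = E + (L - 1) * p"
    and a: "a = min M (ceil_div (x + A + p) (L + 1))" and "a < M"
    and b: "b = min M (ceil_div (x - a + B) L)"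
  shows "ceil_div (x - b + A) L = a" "0 \<le> E + (a - b - p)" "E + (a - b - p) \<le> L"
proof -
  define t where "t = x + A + p"
  have a_eq: "a = ceil_div t (L + 1)" using a \<open>a < M\<close> unfolding t_def by simp
  define r where "r = (L + 1) * a - t"
  have "(L + 1) * (a - 1) < t" "t \<le> (L + 1) * a"
    using ceil_div_bounds[of "L + 1" t] L a_eq by auto
  then have r: "0 \<le> r" "r \<le> L" unfolding r_def by (simp_all add: algebra_simps)
  have expand: "(L + 1) * a = L * a + a" "(L - 1) * p = L * p - p" by (simp_all add: algebra_simps)
  have x_a_B: "x - a + B = L * a - L * p - (r + E)" using AB expand r_def t_def by linarith
  \<comment> \<open>the carry q records whether r + E, which lies in [0, 2L), reaches L\<close>
  define q :: int where "q = (if L \<le> r + E then 1 else 0)"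
  have "ceil_div (x - a + B) L = a - p - q"
  proof (rule ceil_div_eqI)
    have "L * q \<le> r + E" "r + E < L * q + L" using r assms(3,4) unfolding q_def by auto
    then show "L * (a - p - q - 1) < x - a + B" "x - a + B \<le> L * (a - p - q)"
      using x_a_B by (simp_all add: algebra_simps)
  qed (use L in simp)
  then have b_eq: "b = a - p - q" using b \<open>a < M\<close> \<open>0 \<le> p\<close> unfolding q_def by simp
  have "x - b + A = L * a - r + q" using b_eq expand r_def t_def by linarith
  moreover have "q \<le> r" "r - q < L" using r assms(3,4) unfolding q_def by auto
  ultimately have "L * (a - 1) < x - b + A" "x - b + A \<le> L * a" by (simp_all add: algebra_simps)
  with L show "ceil_div (x - b + A) L = a" by (intro ceil_div_eqI) auto
  show "0 \<le> E + (a - b - p)" "E + (a - b - p) \<le> L"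
    using b_eq assms(3,4) unfolding q_def by auto
qed

lemma min_ceil_div_swap_saturated:
  fixes L x A B p E M b :: int
  assumes L: "1 \<le> L" and "0 \<le> E"
    and AB: "A - B = E + (L - 1) * p"
    and sat: "M \<le> ceil_div (x + A + p) (L + 1)"
    and b: "b = min M (ceil_div (x - M + B) L)"
  shows "M \<le> ceil_div (x - b + A) L"
proof -
  have t: "(L + 1) * (M - 1) < x + A + p" using sat L le_ceil_div_iff[of "L + 1"] by simp
  have "b \<le> ceil_div (x - M + B) L" using b by simp
  then have b_bound: "L * (b - 1) < x - M + B" using L le_ceil_div_iff[of L] by simp
  have "L * (M - 1) < x - b + A"
  proof (cases "b + p - M < 0")
    case True
    then show ?thesis using t by (simp add: algebra_simps)
  next
    case False
    then have "b + p - M \<le> L * (b + p - M)" using mult_right_mono[of 1 L "b + p - M"] L by simp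
    then show ?thesis using b_bound AB assms(2) by (simp add: algebra_simps)
  qed
  then show ?thesis using L le_ceil_div_iff[of L] by simp
qed

locale last_two_columns =
  fixes m n :: nat and lam :: "nat \<Rightarrow> int"
  assumes n_ge_2: "2 \<le> n" and lam_inP: "inP m n lam"
begin

text \<open>In the notation of the paper: a i = k_{i,n}, mu = \<lambda>^(2), b i = k_{i,n-1} (read off as
  the last column of \<lambda>^(2)), nu = \<lambda>^(4), c i = k^(4)_{i,n-1} and rho = \<lambda>^(3).\<close>

definition a :: "nat \<Rightarrow> int" where "a i = kk m n lam i n"
definition mu :: "nat \<Rightarrow> int" where "mu i = lam i - a i"
definition b :: "nat \<Rightarrow> int" where "b i = kk m (n - 1) mu i (n - 1)"
definition nu :: "nat \<Rightarrow> int" where "nu i = lam i - b i"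
definition c :: "nat \<Rightarrow> int" where "c i = kk m (n - 1) nu i (n - 1)"
definition rho :: "nat \<Rightarrow> int" where "rho i = mu i - b i"
definition E :: "nat \<Rightarrow> int" where "E i = (\<Sum>l\<in>{i..n-1}. a l - b l - lam n)"

lemma mu_inP: "inP m (n - 1) mu"
  using inP_remove_last_col[OF lam_inP] unfolding mu_def a_def .

lemma a_le: "a i \<le> int m"
  unfolding a_def by (subst kk.simps) simp

lemma a_rec:
  assumes "1 \<le> i" "i < n"
  shows "a i = min (int m) (ceil_div (lam i + (\<Sum>l\<in>{i+1..n-1}. a l) + lam n) (int (n - i) + 1))"
proof -
  have "(\<Sum>l\<in>{i+1..n-1}. a l) + a n = (\<Sum>l\<in>{i+1..n}. a l)"
    using sum_split_cl_ivl[of i "n - 1" n a] assms n_ge_2 by simp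
  moreover have "a n = lam n" using kk_last_last[OF lam_inP] n_ge_2 unfolding a_def by simp
  ultimately show ?thesis
    using kk_last_col[of i n m lam] assms unfolding a_def by (simp add: ac_simps)
qed

lemma b_rec:
  assumes "1 \<le> i" "i \<le> n - 1"
  shows "b i = min (int m) (ceil_div (lam i - a i + (\<Sum>l\<in>{i+1..n-1}. b l)) (int (n - i)))"
  using kk_last_col[of i "n - 1" m mu] assms unfolding b_def by (simp add: mu_def Suc_diff_Suc)

lemma c_rec:
  assumes "1 \<le> i" "i \<le> n - 1"
  shows "c i = min (int m) (ceil_div (nu i + (\<Sum>l\<in>{i+1..n-1}. c l)) (int (n - i)))"
  using kk_last_col[of i "n - 1" m nu] assms unfolding c_def by (simp add: Suc_diff_Suc)

lemma a_antimono: "1 \<le> i \<Longrightarrow> i < n \<Longrightarrow> a (i + 1) \<le> a i"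
  using kk_last_col_step(1)[OF lam_inP] unfolding a_def .

lemma nu_antimono:
  assumes "1 \<le> i" "i < n - 1"
  shows "nu (i + 1) \<le> nu i"
proof -
  have "b i - b (i + 1) \<le> mu i - mu (i + 1)"
    using kk_last_col_step(2)[OF mu_inP assms] unfolding b_def .
  moreover have "a (i + 1) \<le> a i" using a_antimono assms by simp
  ultimately show ?thesis unfolding nu_def mu_def by simp
qed

lemma nu_inP: "inP m (n - 1) nu"
  unfolding inP_def
proof (intro conjI allI impI)
  fix i assume "1 \<le> i \<and> i < n - 1"
  then show "nu (Suc i) \<le> nu i" using nu_antimono by simp
next
  fix i assume i: "1 \<le> i \<and> i \<le> n - 1"
  then have "0 \<le> a i"
    using kk_last_col_bounds[OF lam_inP, of i] unfolding a_def by auto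
  moreover have "0 \<le> mu i - b i" "mu i - b i \<le> int m * int (n - 1 - i)"
    using i kk_last_col_bounds[OF mu_inP, of i] kk_last_col_residual_le[OF mu_inP, of i]
    unfolding b_def by auto
  moreover have "int m * int (n - 1 - i + 1) = int m + int m * int (n - 1 - i)"
    by (simp add: algebra_simps)
  ultimately show "0 \<le> nu i" "nu i \<le> int m * int (n - 1 - i + 1)"
    using a_le[of i] unfolding nu_def mu_def by auto
qed

lemma c_eq_a_unsaturated:
  assumes i: "1 \<le> i" "i \<le> n - 1"
    and c_eq_a: "\<And>l. i < l \<Longrightarrow> l \<le> n - 1 \<Longrightarrow> c l = a l"
    and E: "0 \<le> E (i + 1)" "E (i + 1) < int (n - i)"
  shows "c i = a i \<and> (a i < int m \<longrightarrow> 0 \<le> E i \<and> E i \<le> int (n - i))"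
proof -
  define L where "L = int (n - i)"
  define A where "A = (\<Sum>l\<in>{i+1..n-1}. a l)"
  define B where "B = (\<Sum>l\<in>{i+1..n-1}. b l)"
  have L: "1 \<le> L" using i n_ge_2 unfolding L_def by simp
  have p: "0 \<le> lam n" using inP_bounds(1)[OF lam_inP] n_ge_2 by simp
  have "E (i + 1) = A - B - int (n - 1 - i) * lam n"
    unfolding E_def A_def B_def by (simp add: sum_subtractf)
  then have AB: "A - B = E (i + 1) + (L - 1) * lam n" using i unfolding L_def by simp
  have a_i: "a i = min (int m) (ceil_div (lam i + A + lam n) (L + 1))"
    using a_rec[of i] i n_ge_2 unfolding A_def L_def by simp
  have b_i: "b i = min (int m) (ceil_div (lam i - a i + B) L)"
    using b_rec[OF i] unfolding B_def L_def .
  have "(\<Sum>l\<in>{i+1..n-1}. c l) = A" unfolding A_def using c_eq_a by (intro sum.cong) auto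
  then have c_i: "c i = min (int m) (ceil_div (lam i - b i + A) L)"
    using c_rec[OF i] unfolding L_def by (simp add: nu_def)
  have E_i: "E i = E (i + 1) + (a i - b i - lam n)"
    unfolding E_def using i by (subst sum.atLeast_Suc_atMost) auto
  show ?thesis
  proof (cases "a i < int m")
    case True
    from min_ceil_div_swap_unsaturated[OF L p E(1) _ AB a_i True b_i] E(2)
    show ?thesis using c_i E_i True unfolding L_def by auto
  next
    case False
    then have "a i = int m" using a_le[of i] by simp
    then have "int m \<le> ceil_div (lam i - b i + A) L"
      using min_ceil_div_swap_saturated[OF L E(1) AB] a_i b_i by simp
    then show ?thesis using c_i False \<open>a i = int m\<close> by simp
  qed
qed

lemma c_eq_a_saturated:
  assumes i: "1 \<le> i" "i + 1 \<le> n - 1"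
    and c_eq_a: "\<And>l. i < l \<Longrightarrow> l \<le> n - 1 \<Longrightarrow> c l = a l"
    and sat: "a (i + 1) = int m"
  shows "c i = a i" "a i = int m"
proof -
  define L where "L = int (n - i - 1)"
  define S where "S = (\<Sum>l\<in>{i+2..n-1}. c l)"
  show "a i = int m" using a_antimono[of i] a_le[of i] sat i by simp
  have L: "1 \<le> L" using i unfolding L_def by simp
  have "c (i + 1) = min (int m) (ceil_div (nu (i + 1) + S) L)"
    using c_rec[of "i + 1"] i unfolding S_def L_def by (simp add: Suc_diff_Suc)
  moreover have "c (i + 1) = int m" using c_eq_a[of "i + 1"] sat i by simp
  ultimately have "int m \<le> ceil_div (nu (i + 1) + S) L" by simp
  from min_ceil_div_saturated[OF L this nu_antimono[of i]]
  have "int m \<le> ceil_div (nu i + int m + S) (L + 1)" using i by simp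
  moreover have "(\<Sum>l\<in>{i+1..n-1}. c l) = int m + S"
    using \<open>c (i + 1) = int m\<close> i unfolding S_def by (subst sum.atLeast_Suc_atMost) auto
  ultimately show "c i = a i"
    using c_rec[of i] i \<open>a i = int m\<close> unfolding L_def by (simp add: ac_simps)
qed

lemma c_eq_a_and_E_bounds:
  "1 \<le> i \<Longrightarrow> i \<le> n - 1 \<Longrightarrow> c i = a i \<and> (a i < int m \<longrightarrow> 0 \<le> E i \<and> E i \<le> int (n - i))"
proof (induction "n - i" arbitrary: i rule: less_induct)
  case (less i)
  have c_eq_a: "c l = a l" if "i < l" "l \<le> n - 1" for l
    using less.hyps[of l] that less.prems by auto
  show ?case
  proof (cases "i = n - 1 \<or> a (i + 1) < int m")
    case True
    have "0 \<le> E (i + 1) \<and> E (i + 1) < int (n - i)"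
    proof (cases "i = n - 1")
      case True
      then show ?thesis using n_ge_2 unfolding E_def by simp
    next
      case False
      with True have "a (i + 1) < int m" by simp
      moreover have "i + 1 \<le> n - 1" "n - (i + 1) < n - i" using False less.prems by auto
      ultimately show ?thesis using less.hyps[of "i + 1"] by simp
    qed
    then show ?thesis using c_eq_a_unsaturated[OF less.prems c_eq_a] by simp
  next
    case False
    then have "a (i + 1) = int m" using a_le[of "i + 1"] by simp
    then show ?thesis using c_eq_a_saturated[OF less.prems(1) _ c_eq_a] False less.prems by simp
  qed
qed

corollary c_eq_a: "1 \<le> i \<Longrightarrow> i \<le> n - 1 \<Longrightarrow> c i = a i"
  using c_eq_a_and_E_bounds by blast

lemma kk_mu: "1 \<le> i \<Longrightarrow> j \<le> n - 1 \<Longrightarrow> kk m (n - 1) mu i j = kk m n lam i j"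
  by (rule kk_remove_last_col) (simp_all add: mu_def a_def)

lemma b_eq: "1 \<le> i \<Longrightarrow> b i = kk m n lam i (n - 1)"
  using kk_mu[of i "n - 1"] unfolding b_def by simp

lemma kk_nu_last: "1 \<le> i \<Longrightarrow> i \<le> n - 1 \<Longrightarrow> kk m (n - 1) nu i (n - 1) = kk m n lam i n"
  using c_eq_a unfolding c_def a_def .

lemma kk_rho:
  assumes "1 \<le> i" "j \<le> n - 2"
  shows "kk m (n - 2) rho i j = kk m n lam i j"
proof -
  have "kk m (n - 1 - 1) rho i j = kk m (n - 1) mu i j"
    by (rule kk_remove_last_col) (use assms in \<open>simp_all add: rho_def b_def\<close>)
  then show ?thesis using kk_mu[of i j] assms by (simp add: numeral_2_eq_2)
qed

lemma kk_nu:
  assumes "1 \<le> i" "j \<le> n - 2"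
  shows "kk m (n - 1) nu i j = kk m n lam i j"
proof -
  have "rho l = nu l - kk m (n - 1) nu l (n - 1)" if "1 \<le> l" "l \<le> n - 1" for l
    using c_eq_a[OF that] unfolding rho_def nu_def mu_def c_def by simp
  then have "kk m (n - 1 - 1) rho i j = kk m (n - 1) nu i j"
    by (intro kk_remove_last_col) (use assms in auto)
  then show ?thesis using kk_rho[OF assms] by (simp add: numeral_2_eq_2)
qed

lemma rho_inP: "inP m (n - 2) rho"
  using inP_remove_last_col[OF mu_inP] unfolding rho_def b_def by (simp add: numeral_2_eq_2)

end

theorem lemma4p5:
  fixes n m :: nat and lam :: "nat \<Rightarrow> int"
  assumes "n \<ge> 2" and "m \<ge> 1" and "inP m n lam"
  defines "lam1 \<equiv> (\<lambda>i. lam (i + 1))"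
      and "lam2 \<equiv> (\<lambda>i. lam i - kk m n lam i n)"
      and "lam3 \<equiv> (\<lambda>i. (lam i - kk m n lam i n) - kk m n lam i (n - 1))"
      and "lam4 \<equiv> (\<lambda>i. lam i - kk m n lam i (n - 1))"
  shows "inP m (n - 1) lam1 \<and> inP m (n - 1) lam2 \<and> inP m (n - 1) lam4
         \<and> inP m (n - 2) lam3
         \<and> (\<forall>i j. 1 \<le> i \<and> i \<le> j \<and> j \<le> n - 1 \<longrightarrow>
               kk m (n - 1) lam1 i j = kk m n lam (i + 1) (j + 1))
         \<and> (\<forall>i j. 1 \<le> i \<and> i \<le> j \<and> j \<le> n - 1 \<longrightarrow>
               kk m (n - 1) lam2 i j = kk m n lam i j)
         \<and> (\<forall>i j. 1 \<le> i \<and> i \<le> j \<and> j \<le> n - 2 \<longrightarrow>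
               kk m (n - 2) lam3 i j = kk m n lam i j)
         \<and> (\<forall>i j. 1 \<le> i \<and> i \<le> j \<and> j \<le> n - 2 \<longrightarrow>
               kk m (n - 2) lam3 i j = kk m (n - 1) lam4 i j)
         \<and> (\<forall>i j. 1 \<le> i \<and> i \<le> j \<and> j \<le> n - 1 \<longrightarrow>
               kk m (n - 1) lam4 i j =
                 (if j = n - 1 then kk m n lam i (j + 1) else kk m n lam i j))"
proof -
  interpret last_two_columns m n lam using assms(1,3) by unfold_locales
  have lam2_mu: "lam2 = mu" unfolding lam2_def by (simp add: fun_eq_iff mu_def a_def)
  have lam3_rho: "lam3 i = rho i" and lam4_nu: "lam4 i = nu i" if "1 \<le> i" for i
    using b_eq[OF that] by (simp_all add: lam3_def lam4_def rho_def nu_def mu_def a_def)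
  have kk3: "kk m (n - 2) lam3 i j = kk m n lam i j" if "1 \<le> i" "j \<le> n - 2" for i j
    using kk_cong[of "n - 2" lam3 rho] lam3_rho kk_rho that by simp
  have kk4: "kk m (n - 1) lam4 i j = kk m (n - 1) nu i j" if "1 \<le> i" "j \<le> n - 1" for i j
    using kk_cong[of "n - 1" lam4 nu] lam4_nu that by simp
  have "inP m (n - 2) lam3" using rho_inP inP_cong[of "n - 2" lam3 rho] lam3_rho by simp
  moreover have "inP m (n - 1) lam4" using nu_inP inP_cong[of "n - 1" lam4 nu] lam4_nu by simp
  ultimately show ?thesis
    using inP_drop_first[OF assms(3)] kk_drop_first[where N = n and mu = lam] mu_inP kk_mu
      kk3 kk4 kk_nu kk_nu_last assms(1)
    unfolding lam1_def[symmetric] lam2_mu by auto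
qed

end
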